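(* Let $G$ be a connected graph containing a longest path $L=x_0x_1\ldots x_p$ and a path $P$ of length at least $p-2$. Suppose $|V(P)\cap V(L)|\ge 1$ and let $r=\lceil p/2\rceil$. Then: (1) if $V(P)\cap\{x_r,x_{r+1},\ldots,x_p\}=\emptyset$, then $x_{r-1}\in V(P)$; (2) if $V(P)\cap\{x_0,\ldots,x_{r-1}\}=\emptyset$ and $\ell(P)\ge p-1$, then $x_r\in V(P)$; (3) if $V(P)\cap\{x_0,\ldots,x_{r-1}\}=\emptyset$ and $\ell(P)=p-2$, then $x_r\in V(P)$ or $x_{r+1}\in V(P)$.
   Context: All graphs are finite, simple and undirected. $\ell(P)$ denotes the length (number of edges) of a path $P$; a longest path is one of maximum length in $G$. *)

theory Defs
  imports Complex_Main
begin

definition simple_graph :: "'a set \<Rightarrow> ('a \<Rightarrow> 'a \<Rightarrow> bool) \<Rightarrow> bool" where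
  "simple_graph V E \<longleftrightarrow> finite V \<and> (\<forall>u v. E u v \<longrightarrow> E v u) \<and> (\<forall>v. \<not> E v v)
     \<and> (\<forall>u v. E u v \<longrightarrow> u \<in> V \<and> v \<in> V)"

definition is_path :: "'a set \<Rightarrow> ('a \<Rightarrow> 'a \<Rightarrow> bool) \<Rightarrow> 'a list \<Rightarrow> bool" where
  "is_path V E P \<longleftrightarrow> P \<noteq> [] \<and> distinct P \<and> set P \<subseteq> V
     \<and> (\<forall>i. Suc i < length P \<longrightarrow> E (P ! i) (P ! Suc i))"

definition path_len :: "'a list \<Rightarrow> nat" where
  "path_len P = length P - 1"

definition longest_path :: "'a set \<Rightarrow> ('a \<Rightarrow> 'a \<Rightarrow> bool) \<Rightarrow> 'a list \<Rightarrow> bool" where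
  "longest_path V E L \<longleftrightarrow> is_path V E L \<and> (\<forall>P. is_path V E P \<longrightarrow> path_len P \<le> path_len L)"

definition connected_graph :: "'a set \<Rightarrow> ('a \<Rightarrow> 'a \<Rightarrow> bool) \<Rightarrow> bool" where
  "connected_graph V E \<longleftrightarrow> V \<noteq> {} \<and> (\<forall>u\<in>V. \<forall>v\<in>V. \<exists>P. is_path V E P \<and> hd P = u \<and> last P = v)"

end

theory Submission
  imports Defs
begin

text \<open>Let \<open>x\<^sub>j\<close> be the last vertex of \<open>L\<close> lying on \<open>P\<close>, say \<open>x\<^sub>j = P ! k\<close>. Both halves
  of \<open>P\<close> at \<open>P ! k\<close> can be continued by the tail \<open>x\<^sub>j\<^sub>+\<^sub>1 \<dots> x\<^sub>p\<close> of \<open>L\<close>, which \<open>P\<close> avoids;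
  maximality of \<open>L\<close> makes each half at most as long as \<open>x\<^sub>0 \<dots> x\<^sub>j\<close>, so \<open>\<ell>(P) \<le> 2j\<close>.
  Reversing \<open>L\<close>, the first vertex \<open>x\<^sub>i\<close> of \<open>L\<close> on \<open>P\<close> satisfies \<open>\<ell>(P) \<le> 2(p - i)\<close>.
  Since \<open>\<ell>(P) \<ge> p - 2\<close>, these bounds pin \<open>j\<close> resp. \<open>i\<close> down to the indices in the claim.\<close>

lemma is_path_conv_successively:
  "is_path V E P \<longleftrightarrow> P \<noteq> [] \<and> distinct P \<and> set P \<subseteq> V \<and> successively E P"
  unfolding is_path_def successively_conv_nth by blast

lemma successively_take: "successively R xs \<Longrightarrow> successively R (take n xs)"
  by (metis append_take_drop_id successively_append_iff)

lemma successively_drop: "successively R xs \<Longrightarrow> successively R (drop n xs)"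
  by (metis append_take_drop_id successively_append_iff)

lemma is_path_take:
  assumes "is_path V E P" "0 < n"
  shows "is_path V E (take n P)"
  using assms set_take_subset[of n P]
  by (auto simp: is_path_conv_successively intro: successively_take)

lemma is_path_drop:
  assumes "is_path V E P" "n < length P"
  shows "is_path V E (drop n P)"
  using assms set_drop_subset[of n P]
  by (auto simp: is_path_conv_successively intro: successively_drop)

lemma is_path_rev:
  assumes "symp E" "is_path V E P"
  shows "is_path V E (rev P)"
  using assms by (auto simp: is_path_conv_successively successively_rev
      elim: successively_mono dest: sympD)

lemma is_path_append:
  assumes "is_path V E A" "is_path V E B" "set A \<inter> set B = {}" "E (last A) (hd B)"
  shows "is_path V E (A @ B)"
  using assms by (auto simp: is_path_conv_successively successively_append_iff)

lemma longest_path_rev: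
  assumes "symp E" "longest_path V E L"
  shows "longest_path V E (rev L)"
  using assms unfolding longest_path_def path_len_def by (auto intro: is_path_rev)

lemma longest_path_meet_index_le:
  assumes L: "longest_path V E L" and P: "is_path V E P"
    and j: "j < length L" and k: "k < length P" and meet: "P ! k = L ! j"
    and avoid: "set P \<inter> set (drop (Suc j) L) = {}"
  shows "k \<le> j"
proof -
  let ?head = "take (Suc k) P" and ?tail = "drop (Suc j) L"
  have L_path: "is_path V E L" using L unfolding longest_path_def by blast
  have head: "is_path V E ?head" using is_path_take[OF P] by simp
  have "is_path V E (?head @ ?tail)"
  proof (cases "Suc j < length L")
    case True
    have "E (last ?head) (hd ?tail)"
      using L_path True k meet
      by (simp add: is_path_def take_Suc_conv_app_nth hd_drop_conv_nth)
    moreover have "set ?head \<inter> set ?tail = {}"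
      using avoid set_take_subset[of "Suc k" P] by blast
    ultimately show ?thesis
      using is_path_append[OF head is_path_drop[OF L_path True]] by blast
  qed (use head in simp)
  then have "path_len (?head @ ?tail) \<le> path_len L"
    using L unfolding longest_path_def by blast
  then show ?thesis using j k unfolding path_len_def by simp
qed

lemma path_len_le_twice_last_meet:
  assumes E: "symp E" and L: "longest_path V E L" and P: "is_path V E P"
    and j: "j < length L" "L ! j \<in> set P"
    and after: "\<forall>i. j < i \<and> i < length L \<longrightarrow> L ! i \<notin> set P"
  shows "path_len P \<le> 2 * j"
proof -
  obtain k where k: "k < length P" "P ! k = L ! j"
    using j(2) by (auto simp: in_set_conv_nth)
  have "\<forall>i < length L - Suc j. L ! (Suc j + i) \<notin> set P" using after by simp
  then have avoid: "set P \<inter> set (drop (Suc j) L) = {}"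
    by (auto simp: in_set_conv_nth) (metis nth_mem)
  have "k \<le> j"
    using longest_path_meet_index_le[OF L P j(1) k avoid] .
  moreover have "length P - Suc k \<le> j"
    using longest_path_meet_index_le[OF L is_path_rev[OF E P] j(1)] k avoid
    by (simp add: rev_nth)
  ultimately show ?thesis using k(1) unfolding path_len_def by linarith
qed

lemma path_len_le_twice_first_meet:
  assumes E: "symp E" and L: "longest_path V E L" and P: "is_path V E P"
    and j: "j < length L" "L ! j \<in> set P"
    and before: "\<forall>i < j. L ! i \<notin> set P"
  shows "path_len P \<le> 2 * (path_len L - j)"
proof -
  have "path_len P \<le> 2 * (length L - Suc j)"
  proof (rule path_len_le_twice_last_meet[OF E longest_path_rev[OF E L] P])
    show "rev L ! (length L - Suc j) \<in> set P" using j by (simp add: rev_nth)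
    show "\<forall>i. length L - Suc j < i \<and> i < length (rev L) \<longrightarrow> rev L ! i \<notin> set P"
      using before by (auto simp: rev_nth)
  qed (use j in simp)
  then show ?thesis unfolding path_len_def by simp
qed

lemma exists_last_index:
  assumes "\<exists>x \<in> set xs. Q x"
  obtains j where "j < length xs" "Q (xs ! j)" "\<forall>i. j < i \<and> i < length xs \<longrightarrow> \<not> Q (xs ! i)"
proof -
  let ?R = "\<lambda>i. i < length xs \<and> Q (xs ! i)"
  have ex: "\<exists>i. ?R i" using assms by (auto simp: in_set_conv_nth)
  have bound: "\<And>i. ?R i \<Longrightarrow> i \<le> length xs" by simp
  have "?R (Greatest ?R)" using GreatestI_ex_nat[OF ex bound] .
  moreover have "\<not> Q (xs ! i)" if "Greatest ?R < i" "i < length xs" for i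
    using Greatest_le_nat[of ?R i, OF _ bound] that by auto
  ultimately show ?thesis using that by blast
qed

lemma exists_first_index:
  assumes "\<exists>x \<in> set xs. Q x"
  obtains j where "j < length xs" "Q (xs ! j)" "\<forall>i < j. \<not> Q (xs ! i)"
proof -
  let ?R = "\<lambda>i. i < length xs \<and> Q (xs ! i)"
  have ex: "\<exists>i. ?R i" using assms by (auto simp: in_set_conv_nth)
  have "?R (Least ?R)" by (rule LeastI_ex[OF ex])
  moreover have "\<not> Q (xs ! i)" if "i < Least ?R" for i
    using not_less_Least[OF that] that \<open>?R (Least ?R)\<close> by auto
  ultimately show ?thesis using that by blast
qed

lemma nat_ceiling_half: "nat \<lceil>real n / 2\<rceil> = (n + 1) div 2"
  by linarith

theorem lemma3:
  fixes V :: "'a set" and E :: "'a \<Rightarrow> 'a \<Rightarrow> bool" and L P :: "'a list" and p r :: nat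
  assumes "simple_graph V E"
    and "connected_graph V E"
    and "longest_path V E L"
    and "p = path_len L"
    and "is_path V E P"
    and "path_len P + 2 \<ge> p"
    and "set P \<inter> set L \<noteq> {}"
    and "r = nat \<lceil>real p / 2\<rceil>"
  shows "(set P \<inter> {L ! i | i. r \<le> i \<and> i \<le> p} = {} \<longrightarrow> L ! (r - 1) \<in> set P)
       \<and> (set P \<inter> {L ! i | i. i < r} = {} \<and> path_len P + 1 \<ge> p \<longrightarrow> L ! r \<in> set P)
       \<and> (set P \<inter> {L ! i | i. i < r} = {} \<and> path_len P + 2 = p
            \<longrightarrow> L ! r \<in> set P \<or> L ! (r + 1) \<in> set P)"
proof -
  have E: "symp E" using assms(1) unfolding simple_graph_def symp_def by blast
  have length_L: "length L = Suc p"
    using assms(3,4) unfolding longest_path_def is_path_def path_len_def by auto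
  have meet: "\<exists>x \<in> set L. x \<in> set P" using assms(7) by blast
  obtain j_last where j_last: "j_last < length L" "L ! j_last \<in> set P"
    "\<forall>i. j_last < i \<and> i < length L \<longrightarrow> L ! i \<notin> set P"
    using exists_last_index[OF meet] .
  have last_bound: "path_len P \<le> 2 * j_last"
    using path_len_le_twice_last_meet[OF E assms(3,5) j_last] .
  obtain j_first where j_first: "j_first < length L" "L ! j_first \<in> set P"
    "\<forall>i < j_first. L ! i \<notin> set P"
    using exists_first_index[OF meet] .
  have first_bound: "path_len P \<le> 2 * (p - j_first)"
    using path_len_le_twice_first_meet[OF E assms(3,5) j_first] assms(4) by simp
  have r: "r = (p + 1) div 2" using assms(8) nat_ceiling_half by simp
  have "j_last \<le> p" "j_first \<le> p" using j_last(1) j_first(1) length_L by simp_all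
  show ?thesis
  proof (intro conjI impI)
    assume "set P \<inter> {L ! i | i. r \<le> i \<and> i \<le> p} = {}"
    then have "\<not> r \<le> j_last" using \<open>j_last \<le> p\<close> j_last(2) by blast
    then have "j_last = r - 1" using last_bound assms(6) r by linarith
    then show "L ! (r - 1) \<in> set P" using j_last(2) by simp
  next
    assume early: "set P \<inter> {L ! i | i. i < r} = {} \<and> p \<le> path_len P + 1"
    then have "\<not> j_first < r" using j_first(2) by blast
    then have "j_first = r" using early first_bound \<open>j_first \<le> p\<close> r by linarith
    then show "L ! r \<in> set P" using j_first(2) by simp
  next
    assume early: "set P \<inter> {L ! i | i. i < r} = {} \<and> path_len P + 2 = p"
    then have "\<not> j_first < r" using j_first(2) by blast
    then have "j_first = r \<or> j_first = r + 1"
      using early first_bound \<open>j_first \<le> p\<close> r by linarith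
    then show "L ! r \<in> set P \<or> L ! (r + 1) \<in> set P" using j_first(2) by auto
  qed
qed

end
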